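(* Let $p,q$ be positive integers with $2\le p/q<4$, let $G$ be a graph and $f$ a $(p,q)$-colouring of $G$, and let $f'$ be the $(p,q)$-colouring obtained from $f$ by recolouring a vertex set $X$ by $1$ (i.e. $f'(v)\equiv f(v)+1\pmod p$ for $v\in X$, $f'(v)=f(v)$ otherwise, and $f'$ is assumed to be a $(p,q)$-colouring). Then $f'$ can be obtained from $f$ by a sequence of recolourings of single vertices, in which every intermediate map is a $(p,q)$-colouring, if and only if the induced subdigraph $D_f[X]$ contains no directed cycle.
   Context: A $(p,q)$-colouring of $G$ is a map $f:V(G)\to\{0,\dots,p-1\}$ with $q\le|f(u)-f(v)|\le p-q$ for every edge $uv$. $D_f$ is the digraph on $V(G)$ with an arc $\overrightarrow{xy}$ whenever $xy\in E(G)$ and $f(y)-f(x)\equiv q\pmod p$ (so when $p=2q$ every edge of $G$ gives arcs in both directions, i.e. a directed 2-cycle). Directed cycles include directed 2-cycles. *)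

theory Defs
  imports Main
begin

definition graph :: "'a set \<Rightarrow> ('a \<Rightarrow> 'a \<Rightarrow> bool) \<Rightarrow> bool" where
  "graph V E \<longleftrightarrow> finite V \<and> (\<forall>u v. E u v \<longrightarrow> u \<in> V \<and> v \<in> V)
     \<and> (\<forall>u v. E u v \<longrightarrow> E v u) \<and> (\<forall>v. \<not> E v v)"

definition pq_colouring :: "nat \<Rightarrow> nat \<Rightarrow> 'a set \<Rightarrow> ('a \<Rightarrow> 'a \<Rightarrow> bool) \<Rightarrow> ('a \<Rightarrow> nat) \<Rightarrow> bool" where
  "pq_colouring p q V E f \<longleftrightarrow> (\<forall>v\<in>V. f v < p) \<and>
     (\<forall>u v. E u v \<longrightarrow> int q \<le> \<bar>int (f u) - int (f v)\<bar> \<and> \<bar>int (f u) - int (f v)\<bar> \<le> int p - int q)"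

definition Df_arc :: "nat \<Rightarrow> nat \<Rightarrow> ('a \<Rightarrow> 'a \<Rightarrow> bool) \<Rightarrow> ('a \<Rightarrow> nat) \<Rightarrow> 'a \<Rightarrow> 'a \<Rightarrow> bool" where
  "Df_arc p q E f x y \<longleftrightarrow> E x y \<and> (int (f y) - int (f x)) mod int p = int q mod int p"

definition has_dicycle_in :: "nat \<Rightarrow> nat \<Rightarrow> ('a \<Rightarrow> 'a \<Rightarrow> bool) \<Rightarrow> ('a \<Rightarrow> nat) \<Rightarrow> 'a set \<Rightarrow> bool" where
  "has_dicycle_in p q E f X \<longleftrightarrow> (\<exists>cs. length cs \<ge> 2 \<and> distinct cs \<and> set cs \<subseteq> X \<and>
      (\<forall>i < length cs - 1. Df_arc p q E f (cs ! i) (cs ! Suc i)) \<and>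
      Df_arc p q E f (last cs) (hd cs))"

definition reconfigurable :: "nat \<Rightarrow> nat \<Rightarrow> 'a set \<Rightarrow> ('a \<Rightarrow> 'a \<Rightarrow> bool) \<Rightarrow> ('a \<Rightarrow> nat) \<Rightarrow> ('a \<Rightarrow> nat) \<Rightarrow> bool" where
  "reconfigurable p q V E f g \<longleftrightarrow> (\<exists>fs. fs \<noteq> [] \<and>
      (\<forall>v\<in>V. hd fs v = f v) \<and> (\<forall>v\<in>V. last fs v = g v) \<and>
      (\<forall>h\<in>set fs. pq_colouring p q V E h) \<and>
      (\<forall>i < length fs - 1. \<exists>u\<in>V. \<forall>v\<in>V - {u}. (fs ! i) v = (fs ! Suc i) v))"

end

theory Submission
  imports Defs "HOL-Library.Transitive_Closure_Table"
begin

text \<open>An arc \<open>x \<rightarrow> y\<close> of \<open>D\<^sub>f\<close> means that \<open>f y\<close> is exactly \<open>q\<close> above \<open>f x\<close>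
(cyclically), so raising \<open>f x\<close> by one is blocked by \<open>y\<close> until \<open>y\<close> itself has moved.
If \<open>D\<^sub>f[X]\<close> is acyclic, the vertices of \<open>X\<close> can therefore be raised one at a
time in reverse topological order, and each intermediate map is a colouring.
Conversely, when \<open>p < 4q\<close>, a vertex with an in-arc and an out-arc of \<open>D\<^sub>f\<close> is
frozen as long as the two arc neighbours keep their colours: the colours at
cyclic distance at least \<open>q\<close> from both \<open>f x - q\<close> and \<open>f x + q\<close> reduce to \<open>f x\<close>.
Hence single-vertex recolourings never change a vertex on a directed cycle,
while the target colouring changes every vertex of \<open>X\<close>.\<close>

definition shift_colours :: "nat \<Rightarrow> 'a set \<Rightarrow> ('a \<Rightarrow> nat) \<Rightarrow> 'a \<Rightarrow> nat" where
  "shift_colours p S f = (\<lambda>v. if v \<in> S then (f v + 1) mod p else f v)"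

definition Df_on :: "nat \<Rightarrow> nat \<Rightarrow> ('a \<Rightarrow> 'a \<Rightarrow> bool) \<Rightarrow> ('a \<Rightarrow> nat) \<Rightarrow> 'a set \<Rightarrow> 'a rel" where
  "Df_on p q E f X = {(x, y). x \<in> X \<and> y \<in> X \<and> Df_arc p q E f x y}"

definition pq_compatible :: "nat \<Rightarrow> nat \<Rightarrow> nat \<Rightarrow> nat \<Rightarrow> bool" where
  "pq_compatible p q a b \<longleftrightarrow> int q \<le> \<bar>int a - int b\<bar> \<and> \<bar>int a - int b\<bar> \<le> int p - int q"

lemma pq_compatible_commute: "pq_compatible p q a b \<longleftrightarrow> pq_compatible p q b a"
  unfolding pq_compatible_def by (simp add: abs_minus_commute)

lemma pq_colouring_iff:
  "pq_colouring p q V E f \<longleftrightarrow> (\<forall>v\<in>V. f v < p) \<and> (\<forall>u v. E u v \<longrightarrow> pq_compatible p q (f u) (f v))"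
  unfolding pq_colouring_def pq_compatible_def ..

lemma pq_colouring_less: "pq_colouring p q V E f \<Longrightarrow> v \<in> V \<Longrightarrow> f v < p"
  unfolding pq_colouring_iff by blast

lemma pq_colouring_edge: "pq_colouring p q V E f \<Longrightarrow> E u v \<Longrightarrow> pq_compatible p q (f u) (f v)"
  unfolding pq_colouring_iff by blast

lemma diff_mod_eq_iff:
  fixes a b p q :: nat
  assumes "a < p" "b < p" "q < p"
  shows "(int b - int a) mod int p = int q mod int p \<longleftrightarrow> int b - int a \<in> {int q, int q - int p}"
proof (cases "a \<le> b")
  case True
  then have "(int b - int a) mod int p = int b - int a"
    using assms by (intro mod_pos_pos_trivial) auto
  then show ?thesis using assms True by auto
next
  case False
  have "(int b - int a) mod int p = (int b - int a + int p) mod int p" by simp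
  also have "\<dots> = int b - int a + int p"
    using assms False by (intro mod_pos_pos_trivial) auto
  finally show ?thesis using assms False by auto
qed

lemma Df_arc_iff:
  assumes "pq_colouring p q V E f" "x \<in> V" "y \<in> V" "q < p"
  shows "Df_arc p q E f x y \<longleftrightarrow> E x y \<and> int (f y) - int (f x) \<in> {int q, int q - int p}"
  using diff_mod_eq_iff[of "f x" p "f y" q] pq_colouring_less[OF assms(1)] assms(2-4)
  unfolding Df_arc_def by auto

lemma pq_compatible_increment:
  assumes "0 < q" "2 * q \<le> p" "a < p" "b < p" "pq_compatible p q a b"
    and "int b - int a \<notin> {int q, int q - int p}"
  shows "pq_compatible p q ((a + 1) mod p) b"
proof (cases "a + 1 < p")
  case True
  then show ?thesis using assms unfolding pq_compatible_def by auto
next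
  case False
  then have "a + 1 = p" using assms by simp
  then show ?thesis using assms unfolding pq_compatible_def by auto
qed

lemma pq_compatible_between_arcs_unique:
  fixes a b c z :: nat
  assumes "0 < q" "2 * q \<le> p" "p < 4 * q" "a < p" "b < p" "c < p" "z < p"
    and "int b - int a \<in> {int q, int q - int p}" "int a - int z \<in> {int q, int q - int p}"
    and "pq_compatible p q c b" "pq_compatible p q z c"
  shows "c = a"
  using assms unfolding pq_compatible_def by (auto simp: abs_if split: if_splits)

lemma pq_colouring_shift_colours_closed:
  assumes "0 < q" "2 * q \<le> p" and G: "graph V E" and f: "pq_colouring p q V E f"
    and "S \<subseteq> X" "X \<subseteq> V" and fX: "pq_colouring p q V E (shift_colours p X f)"
    and closed: "\<forall>x\<in>S. \<forall>y\<in>X. Df_arc p q E f x y \<longrightarrow> y \<in> S"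
  shows "pq_colouring p q V E (shift_colours p S f)"
proof -
  have in_V: "u \<in> V" "v \<in> V" if "E u v" for u v
    using G that unfolding graph_def by auto
  have crossing: "pq_compatible p q ((f u + 1) mod p) (f v)"
    if uv: "E u v" and "u \<in> S" "v \<notin> S" for u v
  proof (cases "v \<in> X")
    case True
    with closed \<open>u \<in> S\<close> \<open>v \<notin> S\<close> have "\<not> Df_arc p q E f u v" by blast
    then have "int (f v) - int (f u) \<notin> {int q, int q - int p}"
      using Df_arc_iff[OF f in_V[OF uv]] uv assms(1,2) by auto
    then show ?thesis
      using pq_compatible_increment assms(1,2) pq_colouring_less[OF f] in_V[OF uv]
        pq_colouring_edge[OF f uv] by blast
  next
    case False
    then show ?thesis
      using pq_colouring_edge[OF fX uv] \<open>u \<in> S\<close> \<open>S \<subseteq> X\<close> unfolding shift_colours_def by auto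
  qed
  have "pq_compatible p q (shift_colours p S f u) (shift_colours p S f v)" if uv: "E u v" for u v
  proof -
    have vu: "E v u" using G uv unfolding graph_def by blast
    show ?thesis
      using pq_colouring_edge[OF fX uv] pq_colouring_edge[OF f uv] crossing[OF uv] crossing[OF vu]
        \<open>S \<subseteq> X\<close> pq_compatible_commute unfolding shift_colours_def by (auto split: if_splits)
  qed
  moreover have "shift_colours p S f v < p" if "v \<in> V" for v
    using pq_colouring_less[OF f that] assms(1,2) unfolding shift_colours_def by auto
  ultimately show ?thesis unfolding pq_colouring_iff by blast
qed

lemma reconfigurable_refl: "pq_colouring p q V E f \<Longrightarrow> reconfigurable p q V E f f"
  unfolding reconfigurable_def by (intro exI[of _ "[f]"]) auto

lemma reconfigurable_snoc:
  assumes "reconfigurable p q V E f g" "u \<in> V" "\<forall>v\<in>V - {u}. h v = g v" "pq_colouring p q V E h"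
  shows "reconfigurable p q V E f h"
proof -
  obtain fs where ne: "fs \<noteq> []" and hd: "\<forall>v\<in>V. hd fs v = f v"
    and last: "\<forall>v\<in>V. last fs v = g v" and col: "\<forall>h\<in>set fs. pq_colouring p q V E h"
    and steps: "\<forall>i < length fs - 1. \<exists>u\<in>V. \<forall>v\<in>V - {u}. (fs ! i) v = (fs ! Suc i) v"
    using assms(1) unfolding reconfigurable_def by blast
  have "\<exists>u\<in>V. \<forall>v\<in>V - {u}. ((fs @ [h]) ! i) v = ((fs @ [h]) ! Suc i) v"
    if "i < length (fs @ [h]) - 1" for i
  proof (cases "i < length fs - 1")
    case True
    then show ?thesis using steps by (auto simp: nth_append)
  next
    case False
    with that have "i = length fs - 1" by simp
    with ne have "(fs @ [h]) ! i = last fs" "(fs @ [h]) ! Suc i = h"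
      by (auto simp: nth_append last_conv_nth)
    then show ?thesis using assms(2,3) last by force
  qed
  then show ?thesis
    unfolding reconfigurable_def using ne hd col assms(4)
    by (intro exI[of _ "fs @ [h]"]) auto
qed

lemma reconfigurable_shift_colours_closed:
  assumes "0 < q" "2 * q \<le> p" "graph V E" and f: "pq_colouring p q V E f"
    and "X \<subseteq> V" "pq_colouring p q V E (shift_colours p X f)"
    and wf: "wf (Df_on p q E f X)"
    and "finite S"
  shows "S \<subseteq> X \<Longrightarrow> \<forall>x\<in>S. \<forall>y\<in>X. Df_arc p q E f x y \<longrightarrow> y \<in> S
           \<Longrightarrow> reconfigurable p q V E f (shift_colours p S f)"
  using \<open>finite S\<close>
proof (induction rule: finite_psubset_induct)
  case (psubset S)
  show ?case
  proof (cases "S = {}")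
    case True
    then have "shift_colours p S f = f" unfolding shift_colours_def by simp
    then show ?thesis using reconfigurable_refl[OF f] by simp
  next
    case False
    then obtain z where "z \<in> S" and minimal: "\<forall>y. (y, z) \<in> Df_on p q E f X \<longrightarrow> y \<notin> S"
      using wf unfolding wf_eq_minimal by blast
    have "\<forall>x\<in>S - {z}. \<forall>y\<in>X. Df_arc p q E f x y \<longrightarrow> y \<in> S - {z}"
      using psubset.prems minimal unfolding Df_on_def by blast
    then have "reconfigurable p q V E f (shift_colours p (S - {z}) f)"
      using psubset.IH[of "S - {z}"] psubset.prems \<open>z \<in> S\<close> by blast
    moreover have "z \<in> V" using \<open>z \<in> S\<close> psubset.prems \<open>X \<subseteq> V\<close> by blast
    moreover have "\<forall>v\<in>V - {z}. shift_colours p S f v = shift_colours p (S - {z}) f v"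
      unfolding shift_colours_def by simp
    moreover have "pq_colouring p q V E (shift_colours p S f)"
      using pq_colouring_shift_colours_closed assms(1-6) psubset.prems by blast
    ultimately show ?thesis by (rule reconfigurable_snoc)
  qed
qed

lemma has_dicycle_in_if_not_acyclic:
  assumes irrefl: "\<forall>v. \<not> E v v" and "\<not> acyclic (Df_on p q E f X)"
  shows "has_dicycle_in p q E f X"
proof -
  let ?R = "\<lambda>a b. (a, b) \<in> Df_on p q E f X"
  obtain x where "(x, x) \<in> (Df_on p q E f X)\<^sup>+" using assms(2) unfolding acyclic_def by blast
  then obtain y where xy: "(x, y) \<in> Df_on p q E f X" and "(y, x) \<in> (Df_on p q E f X)\<^sup>*"
    by (blast dest: tranclD)
  then have "?R\<^sup>*\<^sup>* y x" by (simp add: rtranclp_rtrancl_eq)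
  then obtain ys where "rtrancl_path ?R y ys x" unfolding rtranclp_eq_rtrancl_path by blast
  then obtain cs where path: "rtrancl_path ?R y cs x" and "distinct (y # cs)"
    by (rule rtrancl_path_distinct)
  have "cs \<noteq> []"
  proof
    assume "cs = []"
    with path have "y = x" by (auto elim: rtrancl_path.cases)
    with xy irrefl show False unfolding Df_on_def Df_arc_def by auto
  qed
  then have "last cs = x" "length (y # cs) \<ge> 2"
    using rtrancl_path_last[OF path] by (auto simp: neq_Nil_conv)
  moreover have "set (y # cs) \<subseteq> X"
    using xy by (auto simp: Df_on_def dest: rtrancl_path_Range[OF path])
  moreover have "Df_arc p q E f ((y # cs) ! i) ((y # cs) ! Suc i)" if "i < length (y # cs) - 1" for i
    using rtrancl_path_nth[OF path, of i] that unfolding Df_on_def by simp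
  ultimately show ?thesis
    unfolding has_dicycle_in_def using \<open>distinct (y # cs)\<close> \<open>cs \<noteq> []\<close> xy
    by (intro exI[of _ "y # cs"]) (auto simp: Df_on_def)
qed

lemma dicycle_in_out_arcs:
  assumes "has_dicycle_in p q E f X"
  obtains C where "C \<noteq> {}" "C \<subseteq> X"
    "\<forall>x\<in>C. \<exists>y\<in>C. \<exists>z\<in>C. Df_arc p q E f x y \<and> Df_arc p q E f z x"
proof -
  obtain cs where len: "length cs \<ge> 2" and "set cs \<subseteq> X"
    and arcs: "\<forall>i < length cs - 1. Df_arc p q E f (cs ! i) (cs ! Suc i)"
    and closing: "Df_arc p q E f (last cs) (hd cs)"
    using assms unfolding has_dicycle_in_def by blast
  then have "cs \<noteq> []" by auto
  define n where "n = length cs"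
  have succ: "Df_arc p q E f (cs ! j) (cs ! ((j + 1) mod n))" if "j < n" for j
  proof (cases "j + 1 < n")
    case True
    then show ?thesis using arcs n_def by simp
  next
    case False
    with that have "j + 1 = n" by simp
    then have "j = length cs - 1" "(j + 1) mod n = 0" using n_def by auto
    then show ?thesis using closing \<open>cs \<noteq> []\<close> by (simp add: last_conv_nth hd_conv_nth)
  qed
  have "\<exists>y\<in>set cs. \<exists>z\<in>set cs. Df_arc p q E f x y \<and> Df_arc p q E f z x" if "x \<in> set cs" for x
  proof -
    obtain j where j: "j < n" "x = cs ! j" using \<open>x \<in> set cs\<close> n_def by (auto simp: in_set_conv_nth)
    define k where "k = (j + n - 1) mod n"
    have "k < n" unfolding k_def using \<open>cs \<noteq> []\<close> n_def by (intro mod_less_divisor) simp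
    have "(k + 1) mod n = (j + n - 1 + 1) mod n" unfolding k_def by (simp add: mod_Suc_eq)
    also have "\<dots> = (j + n) mod n" using \<open>cs \<noteq> []\<close> n_def by (simp add: Suc_diff_le)
    also have "\<dots> = j" using j by simp
    finally have "(k + 1) mod n = j" .
    have "Df_arc p q E f x (cs ! ((j + 1) mod n))" "Df_arc p q E f (cs ! k) x"
      using succ[OF j(1)] succ[OF \<open>k < n\<close>] j(2) \<open>(k + 1) mod n = j\<close> by simp_all
    moreover have "cs ! ((j + 1) mod n) \<in> set cs" "cs ! k \<in> set cs"
      using \<open>k < n\<close> n_def by (simp_all add: \<open>cs \<noteq> []\<close>)
    ultimately show ?thesis by blast
  qed
  then show ?thesis using \<open>set cs \<subseteq> X\<close> \<open>cs \<noteq> []\<close> by (intro that[of "set cs"]) auto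
qed

lemma pq_colouring_fixed_between_arcs:
  assumes "0 < q" "2 * q \<le> p" "p < 4 * q" "graph V E" "pq_colouring p q V E f"
    and g: "pq_colouring p q V E g" and "x \<in> V"
    and "Df_arc p q E f x y" "Df_arc p q E f z x" "g y = f y" "g z = f z"
  shows "g x = f x"
proof -
  have "E x y" "E z x" using assms(8,9) unfolding Df_arc_def by auto
  then have "y \<in> V" "z \<in> V" using assms(4) unfolding graph_def by auto
  then show ?thesis
    using pq_compatible_between_arcs_unique[of q p "f x" "f y" "g x" "f z"]
      Df_arc_iff[OF assms(5)] pq_colouring_less[OF assms(5)] pq_colouring_less[OF g]
      pq_colouring_edge[OF g \<open>E x y\<close>] pq_colouring_edge[OF g \<open>E z x\<close>] assms
    by auto
qed

lemma reconfiguration_fixes_cyclic_set: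
  assumes "0 < q" "2 * q \<le> p" "p < 4 * q" and G: "graph V E" and f: "pq_colouring p q V E f"
    and "C \<subseteq> V" and cyclic: "\<forall>x\<in>C. \<exists>y\<in>C. \<exists>z\<in>C. Df_arc p q E f x y \<and> Df_arc p q E f z x"
    and "reconfigurable p q V E f g" and "x \<in> C"
  shows "g x = f x"
proof -
  obtain fs where ne: "fs \<noteq> []" and hd: "\<forall>v\<in>V. hd fs v = f v"
    and last: "\<forall>v\<in>V. last fs v = g v" and col: "\<forall>h\<in>set fs. pq_colouring p q V E h"
    and steps: "\<forall>i < length fs - 1. \<exists>u\<in>V. \<forall>v\<in>V - {u}. (fs ! i) v = (fs ! Suc i) v"
    using assms(8) unfolding reconfigurable_def by blast
  have "\<forall>x\<in>C. (fs ! i) x = f x" if "i < length fs" for i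
    using that
  proof (induction i)
    case 0
    then show ?case using hd \<open>C \<subseteq> V\<close> ne by (auto simp: hd_conv_nth)
  next
    case (Suc i)
    then have "i < length fs - 1" by simp
    with steps obtain u where "u \<in> V" and unchanged: "\<forall>v\<in>V - {u}. (fs ! i) v = (fs ! Suc i) v"
      by blast
    have "(fs ! Suc i) x = f x" if "x \<in> C" for x
    proof (cases "x = u")
      case False
      then show ?thesis using Suc unchanged \<open>x \<in> C\<close> \<open>C \<subseteq> V\<close> by force
    next
      case True
      obtain y z where "y \<in> C" "z \<in> C" and arcs: "Df_arc p q E f x y" "Df_arc p q E f z x"
        using cyclic \<open>x \<in> C\<close> by blast
      have "y \<noteq> x" "z \<noteq> x" using arcs G unfolding Df_arc_def graph_def by auto
      then have "(fs ! Suc i) y = f y" "(fs ! Suc i) z = f z"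
        using Suc unchanged True \<open>y \<in> C\<close> \<open>z \<in> C\<close> \<open>C \<subseteq> V\<close> by force+
      then show ?thesis
        using pq_colouring_fixed_between_arcs[OF assms(1-3) G f _ _ arcs] col Suc.prems
          \<open>x \<in> C\<close> \<open>C \<subseteq> V\<close> by auto
    qed
    then show ?case by blast
  qed
  then show ?thesis
    using ne last \<open>x \<in> C\<close> \<open>C \<subseteq> V\<close> by (force simp: last_conv_nth)
qed

lemma not_reconfigurable_shift_colours_if_dicycle:
  assumes "0 < q" "2 * q \<le> p" "p < 4 * q" "graph V E" "pq_colouring p q V E f" "X \<subseteq> V"
    and "has_dicycle_in p q E f X"
  shows "\<not> reconfigurable p q V E f (shift_colours p X f)"
proof
  assume reconf: "reconfigurable p q V E f (shift_colours p X f)"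
  obtain C where C: "C \<noteq> {}" "C \<subseteq> X"
    "\<forall>x\<in>C. \<exists>y\<in>C. \<exists>z\<in>C. Df_arc p q E f x y \<and> Df_arc p q E f z x"
    using assms(7) by (rule dicycle_in_out_arcs)
  then obtain x where "x \<in> C" by blast
  have "C \<subseteq> V" using C(2) assms(6) by blast
  have "shift_colours p X f x = f x"
    using reconfiguration_fixes_cyclic_set[OF assms(1-5) \<open>C \<subseteq> V\<close> C(3) reconf \<open>x \<in> C\<close>] .
  then have "(f x + 1) mod p = f x"
    using C(2) \<open>x \<in> C\<close> unfolding shift_colours_def by auto
  moreover have "f x < p" using pq_colouring_less[OF assms(5)] \<open>C \<subseteq> V\<close> \<open>x \<in> C\<close> by blast
  ultimately show False using assms(1,2) by (cases "f x + 1 = p") auto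
qed

lemma reconfigurable_shift_colours_if_no_dicycle:
  assumes "0 < q" "2 * q \<le> p" "graph V E" "pq_colouring p q V E f" "X \<subseteq> V"
    and "pq_colouring p q V E (shift_colours p X f)" "\<not> has_dicycle_in p q E f X"
  shows "reconfigurable p q V E f (shift_colours p X f)"
proof -
  have "\<forall>v. \<not> E v v" using assms(3) unfolding graph_def by blast
  then have "acyclic (Df_on p q E f X)" using has_dicycle_in_if_not_acyclic assms(7) by blast
  have "finite X" using assms(3,5) rev_finite_subset unfolding graph_def by blast
  have "Df_on p q E f X \<subseteq> X \<times> X" unfolding Df_on_def by auto
  then have "finite (Df_on p q E f X)" by (rule finite_subset) (simp add: \<open>finite X\<close>)
  then have "wf (Df_on p q E f X)" using \<open>acyclic (Df_on p q E f X)\<close> by (rule finite_acyclic_wf)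
  then show ?thesis
    using reconfigurable_shift_colours_closed[OF assms(1-6) _ \<open>finite X\<close>] by blast
qed

theorem lemma2p7:
  fixes p q :: nat and V :: "'a set" and E :: "'a \<Rightarrow> 'a \<Rightarrow> bool"
    and f :: "'a \<Rightarrow> nat" and X :: "'a set"
  assumes "0 < q" and "2 * q \<le> p" and "p < 4 * q"
    and "graph V E"
    and "pq_colouring p q V E f"
    and "X \<subseteq> V"
    and "pq_colouring p q V E (\<lambda>v. if v \<in> X then (f v + 1) mod p else f v)"
  shows "reconfigurable p q V E f (\<lambda>v. if v \<in> X then (f v + 1) mod p else f v)
           \<longleftrightarrow> \<not> has_dicycle_in p q E f X"
proof -
  have "pq_colouring p q V E (shift_colours p X f)"
    using assms(7) unfolding shift_colours_def .
  then show ?thesis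
    unfolding shift_colours_def[symmetric]
    using not_reconfigurable_shift_colours_if_dicycle[OF assms(1-6)]
      reconfigurable_shift_colours_if_no_dicycle[OF assms(1,2,4-6)]
    by blast
qed

end
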